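(* Let $G=(V,E)$ be an $n$-node graph, $\mathcal{C}$ a clustering of $G$ produced by $\mathbf{cluster}(G,e)$ for some integer $e \ge 1$, and $d, m$ positive integers (with $d$ possibly $\infty$). Let $\mathcal{S}$ be the output of $\mathbf{createStrips}(G, \mathcal{C}, d, m)$. Then the set of edges lying on paths in $\mathcal{S}$ contains only $O(n)$ edges that are incident on a clustered node (with the constant in $O(\cdot)$ independent of $G, e, d, m$).
   Context: $G$ is unweighted and undirected. For each pair of nodes $u,v$ a shortest path $\rho_G(u,v)$ is fixed, the choice being consistent and such that any two chosen shortest paths intersect on at most one (contiguous) subpath. The procedure $\mathbf{cluster}(G,e)$: initialize $\mathcal{C} = \emptyset$, unmark all nodes; while there is an unmarked node $u$ with at least $e-1$ unmarked neighbors, let $C$ be $u$ together with any $e-1$ of its unmarked neighbors, mark all nodes of $C$, add $C$ to $\mathcal{C}$; return $\mathcal{C}$. Elements of $\mathcal{C}$ are clusters; a node is clustered if it lies in some cluster, unclustered otherwise. The procedure $\mathbf{createStrips}(G,\mathcal{C},d,m)$: initialize $\mathcal{S}=\emptyset$; while there exist $u,v \in V$ such that (1) $\delta_G(u,v) \le d$, (2) $\rho_G(u,v)$ intersects (shares a node with) at most $m$ different paths in $\mathcal{S}$, and (3) $\rho_G(u,v)$ intersects exactly $m$ clusters that share no node with any path in $\mathcal{S}$, add $\rho_G(u,v)$ to $\mathcal{S}$; return $\mathcal{S}$. The paths in $\mathcal{S}$ are called strips. *)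

theory Defs
  imports Main "HOL-Library.Extended_Nat" "HOL-Library.Sublist"
begin

definition graph :: "nat set \<Rightarrow> nat set set \<Rightarrow> bool" where
  "graph V E \<longleftrightarrow> finite V \<and> (\<forall>ed\<in>E. \<exists>x y. ed = {x, y} \<and> x \<noteq> y \<and> x \<in> V \<and> y \<in> V)"

definition adj :: "nat set set \<Rightarrow> nat \<Rightarrow> nat \<Rightarrow> bool" where
  "adj E x y \<longleftrightarrow> {x, y} \<in> E \<and> x \<noteq> y"

definition nbrs :: "nat set \<Rightarrow> nat set set \<Rightarrow> nat \<Rightarrow> nat set" where
  "nbrs V E u = {v \<in> V. adj E u v}"

definition walk :: "nat set \<Rightarrow> nat set set \<Rightarrow> nat list \<Rightarrow> bool" where
  "walk V E p \<longleftrightarrow> p \<noteq> [] \<and> set p \<subseteq> V \<and> (\<forall>i. Suc i < length p \<longrightarrow> adj E (p ! i) (p ! Suc i))"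

definition walk_betw :: "nat set \<Rightarrow> nat set set \<Rightarrow> nat \<Rightarrow> nat \<Rightarrow> nat list \<Rightarrow> bool" where
  "walk_betw V E u v p \<longleftrightarrow> walk V E p \<and> hd p = u \<and> last p = v"

text \<open>Hop distance; \<infinity> if v is not reachable from u.\<close>
definition dist :: "nat set \<Rightarrow> nat set set \<Rightarrow> nat \<Rightarrow> nat \<Rightarrow> enat" where
  "dist V E u v = (INF p \<in> {p. walk_betw V E u v p}. enat (length p - 1))"

definition shortest_path_system ::
  "nat set \<Rightarrow> nat set set \<Rightarrow> (nat \<Rightarrow> nat \<Rightarrow> nat list) \<Rightarrow> bool" where
  "shortest_path_system V E \<rho> \<longleftrightarrow>
     (\<forall>u\<in>V. \<forall>v\<in>V. dist V E u v \<noteq> \<infinity> \<longrightarrow>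
        walk_betw V E u v (\<rho> u v) \<and> enat (length (\<rho> u v) - 1) = dist V E u v
        \<and> \<rho> v u = rev (\<rho> u v)) \<and>
     (\<forall>u\<in>V. \<forall>v\<in>V. \<forall>x\<in>V. \<forall>y\<in>V.
        dist V E u v \<noteq> \<infinity> \<longrightarrow> dist V E x y \<noteq> \<infinity> \<longrightarrow>
        (\<exists>q. set q = set (\<rho> u v) \<inter> set (\<rho> x y) \<and> sublist q (\<rho> u v)
              \<and> (sublist q (\<rho> x y) \<or> sublist (rev q) (\<rho> x y))))"

text \<open>Runs of cluster(G,e): a state is the current set of clusters; marked nodes are their union.\<close>
inductive cluster_reach :: "nat set \<Rightarrow> nat set set \<Rightarrow> nat \<Rightarrow> nat set set \<Rightarrow> bool"
  for V E e where
  init: "cluster_reach V E e {}"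
| step: "cluster_reach V E e Cs \<Longrightarrow> u \<in> V \<Longrightarrow> u \<notin> \<Union>Cs \<Longrightarrow>
         N \<subseteq> nbrs V E u - \<Union>Cs \<Longrightarrow> card N = e - 1 \<Longrightarrow> finite N \<Longrightarrow>
         cluster_reach V E e (insert (insert u N) Cs)"

definition cluster_out :: "nat set \<Rightarrow> nat set set \<Rightarrow> nat \<Rightarrow> nat set set \<Rightarrow> bool" where
  "cluster_out V E e Cs \<longleftrightarrow> cluster_reach V E e Cs \<and>
     \<not> (\<exists>u\<in>V. u \<notin> \<Union>Cs \<and> card (nbrs V E u - \<Union>Cs) \<ge> e - 1)"

definition strip_addable ::
  "nat set \<Rightarrow> nat set set \<Rightarrow> (nat \<Rightarrow> nat \<Rightarrow> nat list) \<Rightarrow> nat set set \<Rightarrow> enat \<Rightarrow> nat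
     \<Rightarrow> nat list set \<Rightarrow> nat \<Rightarrow> nat \<Rightarrow> bool" where
  "strip_addable V E \<rho> Cs d m S u v \<longleftrightarrow>
     u \<in> V \<and> v \<in> V \<and> dist V E u v \<noteq> \<infinity> \<and> dist V E u v \<le> d \<and>
     card {p \<in> S. set p \<inter> set (\<rho> u v) \<noteq> {}} \<le> m \<and>
     card {C \<in> Cs. C \<inter> set (\<rho> u v) \<noteq> {} \<and> (\<forall>p\<in>S. C \<inter> set p = {})} = m"

inductive strips_reach ::
  "nat set \<Rightarrow> nat set set \<Rightarrow> (nat \<Rightarrow> nat \<Rightarrow> nat list) \<Rightarrow> nat set set \<Rightarrow> enat \<Rightarrow> nat
     \<Rightarrow> nat list set \<Rightarrow> bool"
  for V E \<rho> Cs d m where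
  init: "strips_reach V E \<rho> Cs d m {}"
| step: "strips_reach V E \<rho> Cs d m S \<Longrightarrow> strip_addable V E \<rho> Cs d m S u v \<Longrightarrow>
         strips_reach V E \<rho> Cs d m (insert (\<rho> u v) S)"

definition strips_out ::
  "nat set \<Rightarrow> nat set set \<Rightarrow> (nat \<Rightarrow> nat \<Rightarrow> nat list) \<Rightarrow> nat set set \<Rightarrow> enat \<Rightarrow> nat
     \<Rightarrow> nat list set \<Rightarrow> bool" where
  "strips_out V E \<rho> Cs d m S \<longleftrightarrow> strips_reach V E \<rho> Cs d m S \<and>
     \<not> (\<exists>u v. strip_addable V E \<rho> Cs d m S u v)"

definition path_edges :: "nat list \<Rightarrow> nat set set" where
  "path_edges p = {{p ! i, p ! Suc i} | i. Suc i < length p}"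

end

theory Submission
  imports Defs
begin

text \<open>Every strip adds at most as many new edges as it has new vertices, plus \<open>m\<close>: a new edge
  starting at an old vertex lies on an old strip \<open>P\<close> unless it leaves the segment shared with \<open>P\<close>,
  and since that segment is contiguous this happens at most once per old strip met, i.e. at most
  \<open>m\<close> times. The \<open>m\<close> fresh clusters met by the strip are disjoint and avoid all old strips, so
  they provide \<open>m\<close> new vertices. Hence the strips have at most twice as many edges as vertices,
  that is at most \<open>2n\<close> edges.\<close>

lemma walk_iff_successively:
  "walk V E p \<longleftrightarrow> p \<noteq> [] \<and> set p \<subseteq> V \<and> successively (adj E) p"
  by (simp add: walk_def successively_conv_nth)

lemma shortest_walk_distinct:
  assumes "walk_betw V E u v p" and "enat (length p - 1) = dist V E u v"
  shows "distinct p"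
proof (rule ccontr)
  assume "\<not> distinct p"
  then obtain xs ys zs y where p: "p = xs @ [y] @ ys @ [y] @ zs"
    using not_distinct_decomp by blast
  let ?p' = "xs @ [y] @ zs"
  have w: "walk V E p" "hd p = u" "last p = v" using assms(1) by (auto simp: walk_betw_def)
  have "successively (adj E) ?p'"
    using w(1) p by (auto simp: walk_iff_successively successively_append_iff successively_Cons)
  moreover have "set ?p' \<subseteq> V" using w(1) p by (auto simp: walk_def)
  moreover have "hd ?p' = u" using w(2) p by (cases xs) auto
  moreover have "last ?p' = v" using w(3) p by (cases zs) auto
  ultimately have "walk_betw V E u v ?p'" by (simp add: walk_betw_def walk_iff_successively)
  then have "dist V E u v \<le> enat (length ?p' - 1)"
    unfolding dist_def by (rule INF_lower[OF CollectI])
  with assms(2) have "enat (length p - 1) \<le> enat (length ?p' - 1)" by simp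
  then have "length p - 1 \<le> length ?p' - 1" by simp
  then show False using p by simp
qed

lemma finite_path_edges: "finite (path_edges p)"
proof -
  have "path_edges p = (\<lambda>i. {p ! i, p ! Suc i}) ` {..<length p - 1}"
    by (auto simp: path_edges_def)
  then show ?thesis by simp
qed

lemma path_edges_rev: "path_edges (rev p) = path_edges p"
proof -
  have "path_edges (rev p) \<subseteq> path_edges p" for p :: "nat list"
  proof
    fix ed assume "ed \<in> path_edges (rev p)"
    then obtain i where i: "Suc i < length p" "ed = {rev p ! i, rev p ! Suc i}"
      by (auto simp: path_edges_def)
    define k where "k = length p - 2 - i"
    have "Suc k < length p" "rev p ! i = p ! Suc k" "rev p ! Suc i = p ! k"
      using i(1) by (auto simp: k_def rev_nth Suc_diff_Suc numeral_2_eq_2)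
    then show "ed \<in> path_edges p"
      using i(2) by (auto simp: path_edges_def insert_commute)
  qed
  from this this[of "rev p"] show ?thesis by auto
qed

lemma path_edges_mono_sublist:
  assumes "sublist q p"
  shows "path_edges q \<subseteq> path_edges p"
proof
  fix ed assume "ed \<in> path_edges q"
  then obtain k where k: "Suc k < length q" "ed = {q ! k, q ! Suc k}"
    by (auto simp: path_edges_def)
  obtain ps ss where p: "p = ps @ q @ ss" using assms by (auto simp: sublist_def)
  have "p ! (length ps + k) = q ! k" "p ! Suc (length ps + k) = q ! Suc k"
    "Suc (length ps + k) < length p"
    using k(1) p by (auto simp: nth_append)
  then show "ed \<in> path_edges p" using k(2) unfolding path_edges_def by force
qed

lemma distinct_nth_in_infix:
  assumes "distinct (ps @ q @ ss)" and "i < length (ps @ q @ ss)" and "(ps @ q @ ss) ! i \<in> set q"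
  shows "length ps \<le> i \<and> i < length ps + length q"
proof -
  let ?p = "ps @ q @ ss"
  obtain k where k: "k < length q" "q ! k = ?p ! i" using assms(3) by (metis in_set_conv_nth)
  have "?p ! (length ps + k) = q ! k" "length ps + k < length ?p" using k(1) by (auto simp: nth_append)
  with assms(1,2) k(2) have "i = length ps + k" by (metis nth_eq_iff_index_eq)
  then show ?thesis using k(1) by simp
qed

lemma path_edge_in_segment:
  assumes "distinct p" and "sublist q p" and "i < j" and "j < length p"
    and "p ! i \<in> set q" and "p ! j \<in> set q"
  shows "{p ! i, p ! Suc i} \<in> path_edges q"
proof -
  obtain ps ss where p: "p = ps @ q @ ss" using assms(2) by (auto simp: sublist_def)
  have pos: "length ps \<le> i" "j < length ps + length q"
    using distinct_nth_in_infix[of ps q ss i] distinct_nth_in_infix[of ps q ss j] assms p by auto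
  define k where "k = i - length ps"
  have "Suc k < length q" "q ! k = p ! i" "q ! Suc k = p ! Suc i"
    using pos assms(3) p by (auto simp: nth_append k_def Suc_diff_le)
  then show ?thesis unfolding path_edges_def by force
qed

lemma shortest_paths_meet_in_segment:
  assumes "shortest_path_system V E \<rho>"
    and "u \<in> V" "v \<in> V" "dist V E u v \<noteq> \<infinity>" and "x \<in> V" "y \<in> V" "dist V E x y \<noteq> \<infinity>"
  shows "\<exists>q. sublist q (\<rho> u v) \<and> set q = set (\<rho> x y) \<inter> set (\<rho> u v)
           \<and> path_edges q \<subseteq> path_edges (\<rho> x y)"
proof -
  obtain q where q: "set q = set (\<rho> u v) \<inter> set (\<rho> x y)" "sublist q (\<rho> u v)"
    "sublist q (\<rho> x y) \<or> sublist (rev q) (\<rho> x y)"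
    using assms unfolding shortest_path_system_def by blast
  have "path_edges q \<subseteq> path_edges (\<rho> x y)"
    using q(3) path_edges_mono_sublist[of q] path_edges_mono_sublist[of "rev q"]
    by (auto simp: path_edges_rev)
  with q(1,2) show ?thesis by blast
qed

text \<open>A new edge starts either at a new vertex or at a vertex of some old \<open>P\<close>; in the latter
  case it is the last edge of \<open>p\<close> leaving the segment shared with \<open>P\<close>, so the choice of \<open>P\<close>
  is injective.\<close>
lemma card_new_path_edges_le:
  fixes p :: "nat list" and S :: "nat list set"
  assumes "finite S" and "distinct p"
    and segments: "\<forall>P\<in>S. \<exists>q. sublist q p \<and> set q = set P \<inter> set p \<and> path_edges q \<subseteq> path_edges P"
  shows "card (path_edges p - (\<Union>P\<in>S. path_edges P))
         \<le> card (set p - (\<Union>P\<in>S. set P)) + card {P\<in>S. set P \<inter> set p \<noteq> {}}"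
proof -
  define Old where "Old = (\<Union>P\<in>S. path_edges P)"
  define e where "e i = {p ! i, p ! Suc i}" for i
  define I1 where "I1 = {i. Suc i < length p \<and> p ! i \<notin> (\<Union>P\<in>S. set P)}"
  define I2 where "I2 = {i. Suc i < length p \<and> p ! i \<in> (\<Union>P\<in>S. set P) \<and> e i \<notin> Old}"
  have fin: "finite I1" "finite I2"
    by (rule finite_subset[of _ "{..<length p}"], auto simp: I1_def I2_def)+
  have "path_edges p - Old \<subseteq> e ` (I1 \<union> I2)"
    by (auto simp: path_edges_def e_def I1_def I2_def)
  then have "card (path_edges p - Old) \<le> card (e ` (I1 \<union> I2))"
    using fin by (intro card_mono) auto
  also have "\<dots> \<le> card I1 + card I2"
    using card_image_le[of "I1 \<union> I2" e] card_Un_le[of I1 I2] fin by simp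
  finally have edges: "card (path_edges p - Old) \<le> card I1 + card I2" .
  have "card I1 \<le> card (set p - (\<Union>P\<in>S. set P))"
    using assms(2) by (intro card_inj_on_le[of "nth p"]) (auto simp: inj_on_def I1_def nth_eq_iff_index_eq)
  moreover have "card I2 \<le> card {P\<in>S. set P \<inter> set p \<noteq> {}}"
  proof -
    define f where "f i = (SOME P. P \<in> S \<and> p ! i \<in> set P)" for i
    have f: "f i \<in> S \<and> p ! i \<in> set (f i)" if "i \<in> I2" for i
      unfolding f_def by (rule someI_ex) (use that in \<open>auto simp: I2_def\<close>)
    have no_later: False if ab: "a \<in> I2" "b \<in> I2" "f a = f b" "a < b" for a b
    proof -
      obtain q where q: "sublist q p" "set q = set (f a) \<inter> set p" "path_edges q \<subseteq> path_edges (f a)"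
        using segments f[OF ab(1)] by blast
      have "e a \<in> path_edges q"
        unfolding e_def using ab f[OF ab(1)] f[OF ab(2)]
        by (intro path_edge_in_segment[OF assms(2) q(1)]) (auto simp: q(2) I2_def)
      then show False using q(3) f[OF ab(1)] ab(1) by (auto simp: I2_def Old_def)
    qed
    have "inj_on f I2"
      by (rule inj_onI) (metis no_later linorder_neqE_nat)
    moreover have "f ` I2 \<subseteq> {P\<in>S. set P \<inter> set p \<noteq> {}}" using f by (force simp: I2_def)
    ultimately show ?thesis using assms(1) by (intro card_inj_on_le) auto
  qed
  ultimately show ?thesis using edges by (simp add: Old_def)
qed

lemma cluster_reach_pairwise_disjnt:
  assumes "cluster_reach V E e Cs"
  shows "pairwise disjnt Cs"
  using assms by (induction rule: cluster_reach.induct) (auto simp: pairwise_insert disjnt_def)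

lemma card_fresh_clusters_le:
  assumes "pairwise disjnt Cs"
  shows "card {C\<in>Cs. C \<inter> set p \<noteq> {} \<and> (\<forall>P\<in>S. C \<inter> set P = {})}
         \<le> card (set p - (\<Union>P\<in>S. set P))"
proof -
  define F where "F = {C\<in>Cs. C \<inter> set p \<noteq> {} \<and> (\<forall>P\<in>S. C \<inter> set P = {})}"
  define g where "g C = (SOME x. x \<in> C \<inter> set p)" for C
  have g: "g C \<in> C \<inter> set p" if "C \<in> F" for C
    unfolding g_def by (rule someI_ex) (use that in \<open>auto simp: F_def\<close>)
  have "inj_on g F"
  proof (rule inj_onI)
    fix C D assume "C \<in> F" "D \<in> F" "g C = g D"
    then show "C = D" using g[of C] g[of D] assms by (auto simp: F_def pairwise_def disjnt_def)
  qed
  moreover have "g ` F \<subseteq> set p - (\<Union>P\<in>S. set P)" using g by (force simp: F_def)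
  ultimately show ?thesis unfolding F_def[symmetric] by (intro card_inj_on_le) auto
qed

lemma strips_reach_shortest_paths:
  assumes "strips_reach V E \<rho> Cs d m S"
  shows "finite S \<and> (\<forall>P\<in>S. \<exists>x\<in>V. \<exists>y\<in>V. dist V E x y \<noteq> \<infinity> \<and> P = \<rho> x y)"
  using assms by (induction rule: strips_reach.induct) (auto simp: strip_addable_def)

lemma strips_reach_card_edges:
  assumes "strips_reach V E \<rho> Cs d m S" and "shortest_path_system V E \<rho>"
    and "pairwise disjnt Cs"
  shows "card (\<Union>P\<in>S. path_edges P) \<le> 2 * card (\<Union>P\<in>S. set P)"
  using assms(1)
proof (induction rule: strips_reach.induct)
  case init then show ?case by simp
next
  case (step S u v)
  define p where "p = \<rho> u v"
  define New where "New = set p - (\<Union>P\<in>S. set P)"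
  define Old where "Old = (\<Union>P\<in>S. path_edges P)"
  have uv: "u \<in> V" "v \<in> V" "dist V E u v \<noteq> \<infinity>"
    and met: "card {P \<in> S. set P \<inter> set p \<noteq> {}} \<le> m"
    and fresh: "card {C \<in> Cs. C \<inter> set p \<noteq> {} \<and> (\<forall>P\<in>S. C \<inter> set P = {})} = m"
    using step.hyps(2) by (auto simp: strip_addable_def p_def)
  have S: "finite S" "\<forall>P\<in>S. \<exists>x\<in>V. \<exists>y\<in>V. dist V E x y \<noteq> \<infinity> \<and> P = \<rho> x y"
    using strips_reach_shortest_paths[OF step.hyps(1)] by auto
  have "distinct p"
    using assms(2) uv by (intro shortest_walk_distinct) (auto simp: shortest_path_system_def p_def)
  moreover have "\<forall>P\<in>S. \<exists>q. sublist q p \<and> set q = set P \<inter> set p \<and> path_edges q \<subseteq> path_edges P"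
  proof
    fix P assume "P \<in> S"
    then obtain x y where "x \<in> V" "y \<in> V" "dist V E x y \<noteq> \<infinity>" "P = \<rho> x y" using S(2) by blast
    then show "\<exists>q. sublist q p \<and> set q = set P \<inter> set p \<and> path_edges q \<subseteq> path_edges P"
      using shortest_paths_meet_in_segment[OF assms(2) uv] unfolding p_def by blast
  qed
  ultimately have "card (path_edges p - Old) \<le> card New + card {P \<in> S. set P \<inter> set p \<noteq> {}}"
    unfolding New_def Old_def by (rule card_new_path_edges_le[OF S(1)])
  with met have "card (path_edges p - Old) \<le> card New + m" by linarith
  moreover have "m \<le> card New"
    using card_fresh_clusters_le[OF assms(3), of p S] fresh unfolding New_def by simp
  moreover have "(\<Union>P\<in>insert p S. path_edges P) = Old \<union> (path_edges p - Old)"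
    by (auto simp: Old_def)
  then have "card (\<Union>P\<in>insert p S. path_edges P) \<le> card Old + card (path_edges p - Old)"
    by (metis card_Un_le)
  moreover have "card (\<Union>P\<in>insert p S. set P) = card (\<Union>P\<in>S. set P) + card New"
  proof -
    have vertices: "(\<Union>P\<in>insert p S. set P) = (\<Union>P\<in>S. set P) \<union> New" by (auto simp: New_def)
    show ?thesis unfolding vertices
      using S(1) by (intro card_Un_disjoint) (auto simp: New_def)
  qed
  ultimately show ?case using step.IH unfolding Old_def p_def by linarith
qed

theorem lemma1:
  "\<exists>c::real. \<forall>V E \<rho> e d m Cs S.
     graph V E \<and> shortest_path_system V E \<rho> \<and> e \<ge> 1 \<and> d \<ge> 1 \<and> m \<ge> 1 \<and>
     cluster_out V E e Cs \<and> strips_out V E \<rho> Cs d m S \<longrightarrow>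
     real (card {ed \<in> (\<Union>p\<in>S. path_edges p). ed \<inter> \<Union>Cs \<noteq> {}}) \<le> c * real (card V)"
proof (rule exI[of _ 2], intro allI impI, elim conjE)
  fix V E \<rho> e d m Cs S
  assume "graph V E" and sps: "shortest_path_system V E \<rho>"
    and co: "cluster_out V E e Cs" and so: "strips_out V E \<rho> Cs d m S"
  have reach: "strips_reach V E \<rho> Cs d m S" using so by (simp add: strips_out_def)
  have S: "finite S" "\<forall>P\<in>S. \<exists>x\<in>V. \<exists>y\<in>V. dist V E x y \<noteq> \<infinity> \<and> P = \<rho> x y"
    using strips_reach_shortest_paths[OF reach] by auto
  have "(\<Union>P\<in>S. set P) \<subseteq> V"
    using S(2) sps by (fastforce simp: shortest_path_system_def walk_betw_def walk_def)
  then have covered: "card (\<Union>P\<in>S. set P) \<le> card V"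
    using \<open>graph V E\<close> by (intro card_mono) (auto simp: graph_def)
  have "card {ed \<in> (\<Union>p\<in>S. path_edges p). ed \<inter> \<Union>Cs \<noteq> {}} \<le> card (\<Union>P\<in>S. path_edges P)"
    using S(1) finite_path_edges by (intro card_mono) auto
  also have "\<dots> \<le> 2 * card (\<Union>P\<in>S. set P)"
    using strips_reach_card_edges[OF reach sps] cluster_reach_pairwise_disjnt co
    unfolding cluster_out_def by blast
  finally show "real (card {ed \<in> (\<Union>p\<in>S. path_edges p). ed \<inter> \<Union>Cs \<noteq> {}}) \<le> 2 * real (card V)"
    using covered by linarith
qed

end
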